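(* Let $F,G$ be two plane forests with $n$ vertices. Then $F\leq G$ if and only if $G$ is obtained from $F$ by a finite number of transformations, where a transformation of a plane forest at a vertex $s$ which is not a leaf is the following operation: let $c$ be the rightmost child of $s$; remove the edge from $s$ to $c$ (so that $c$ keeps its own subtree); if $s$ has a parent $p$, make $c$ a child of $p$ placed immediately to the right of $s$ among the children of $p$; if $s$ is a root, make $c$ a root placed immediately to the right of the tree of $s$. All other parts of the forest are unchanged.
   Context: A plane poset is a finite set with two partial orders $\leq_h,\leq_r$ such that two distinct elements are $\leq_h$-comparable iff they are not $\leq_r$-comparable, considered up to isomorphism. A plane forest is a plane poset which does not contain, as a plane subposet (subset with restricted orders), the plane poset $\{a,b,c\}$ with $a<_r b$, $a<_h c$, $b<_h c$. Equivalently, a plane forest is a finite rooted forest (roots at the bottom) in which the roots are linearly ordered from left to right and the children of each vertex are linearly ordered from left to right; $x\leq_h y$ iff $x$ is an ancestor of $y$ (or $x=y$), and for $\leq_h$-incomparable $x,y$, $x<_r y$ iff $x$ lies to the left of $y$. On a plane poset, $x\leq y$ iff ($x\leq_h y$ or $x\leq_r y$) is a total order (known fact). For plane posets $P,Q$ of the same cardinality, $\theta_{P,Q}$ is the increasing bijection $P\to Q$ for these total orders, and $P\leq Q$ means: for all $x,y\in P$, $\theta_{P,Q}(x)\leq_h\theta_{P,Q}(y)$ in $Q$ implies $x\leq_h y$ in $P$. *)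

theory Defs
  imports Main "HOL-Library.Sublist"
begin

text \<open>This representation is canonical, i.e. it represents plane forests up to isomorphism.\<close>

datatype ptree = Node (children: "ptree list")

type_synonym pforest = "ptree list"

text \<open>Vertices of a plane forest are addressed by nonempty paths of child indices:
  [i] is the i-th root, i # p is the vertex p inside the i-th tree's children forest.\<close>

inductive is_vertex :: "pforest \<Rightarrow> nat list \<Rightarrow> bool" where
  root: "i < length F \<Longrightarrow> is_vertex F [i]"
| sub:  "i < length F \<Longrightarrow> is_vertex (children (F ! i)) p \<Longrightarrow> is_vertex F (i # p)"

definition vertices :: "pforest \<Rightarrow> nat list set" where
  "vertices F = {p. is_vertex F p}"

text \<open>The two partial orders of the plane poset associated with a plane forest.
  x \<le>_h y iff x is an ancestor of y (or x = y), i.e. the path of x is a prefix of that of y.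
  For h-incomparable x, y: x <_r y iff x lies to the left of y.\<close>

definition h_le :: "nat list \<Rightarrow> nat list \<Rightarrow> bool" where
  "h_le x y \<longleftrightarrow> prefix x y"

definition r_lt :: "nat list \<Rightarrow> nat list \<Rightarrow> bool" where
  "r_lt x y \<longleftrightarrow> \<not> h_le x y \<and> \<not> h_le y x \<and>
     (\<exists>u a b v w. x = u @ a # v \<and> y = u @ b # w \<and> a < b)"

definition r_le :: "nat list \<Rightarrow> nat list \<Rightarrow> bool" where
  "r_le x y \<longleftrightarrow> x = y \<or> r_lt x y"

definition tot_le :: "nat list \<Rightarrow> nat list \<Rightarrow> bool" where
  "tot_le x y \<longleftrightarrow> h_le x y \<or> r_le x y"

text \<open>The relation P \<le> Q between plane forests of the same cardinality:
  theta is the increasing bijection for the total orders (unique, since these orders are total),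
  and theta(x) \<le>_h theta(y) in Q must imply x \<le>_h y in P.\<close>

definition forest_le :: "pforest \<Rightarrow> pforest \<Rightarrow> bool" where
  "forest_le P Q \<longleftrightarrow> card (vertices P) = card (vertices Q) \<and>
     (\<exists>\<theta>. bij_betw \<theta> (vertices P) (vertices Q) \<and>
          (\<forall>x\<in>vertices P. \<forall>y\<in>vertices P. tot_le x y \<longrightarrow> tot_le (\<theta> x) (\<theta> y)) \<and>
          (\<forall>x\<in>vertices P. \<forall>y\<in>vertices P. h_le (\<theta> x) (\<theta> y) \<longrightarrow> h_le x y))"

text \<open>One transformation at a non-leaf vertex s: its rightmost child c is detached (keeping
  its subtree) and inserted immediately to the right of s, among the siblings of s (the children
  of the parent of s, or the roots if s is a root).\<close>

inductive transform :: "pforest \<Rightarrow> pforest \<Rightarrow> bool" where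
  here: "i < length F \<Longrightarrow> F ! i = Node cs \<Longrightarrow> cs \<noteq> [] \<Longrightarrow>
         transform F (take i F @ Node (butlast cs) # last cs # drop (Suc i) F)"
| below: "i < length F \<Longrightarrow> F ! i = Node cs \<Longrightarrow> transform cs cs' \<Longrightarrow>
         transform F (F[i := Node cs'])"

end

theory Submission
  imports Defs "HOL-Library.List_Lexorder"
begin

text \<open>Vertices are addressed by paths of child indices: the total order \<open>\<le>_h \<union> \<le>_r\<close> is then
  the lexicographic order on paths and \<open>\<le>_h\<close> is the prefix order.  A transformation at \<open>s\<close>
  relocates the vertices by a lexicographically increasing bijection that preserves ancestry except
  along the edge from \<open>s\<close> to its last child, which it breaks; composing these relocations shows
  \<open>F \<le> G\<close> whenever \<open>G\<close> is reachable from \<open>F\<close>.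
  Conversely, let \<open>\<theta>\<close> witness \<open>F \<le> G\<close>.  If \<open>\<theta>\<close> breaks some edge from \<open>s\<close>, then, since the
  descendants of a vertex form an interval of the total order, it also breaks the edge from \<open>s\<close> to its
  last child; transforming \<open>F\<close> at \<open>s\<close> gives a forest with fewer ancestor-descendant pairs which
  is still \<open>\<le> G\<close>, witnessed by \<open>\<theta>\<close> after the inverse relocation.  If \<open>\<theta>\<close> breaks no edge, it
  preserves and reflects ancestry, and an increasing bijection with this property is the identity on
  paths, so \<open>F = G\<close>.\<close>

lemma prefix_imp_less_eq: "prefix (x::'a::linorder list) y \<Longrightarrow> x \<le> y"
proof (induction x arbitrary: y)
  case (Cons a x) then show ?case by (cases y) auto
qed simp

lemma append_Cons_less: "(a::'a::linorder) < b \<Longrightarrow> u @ a # v < u @ b # w"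
  by (induction u) auto

lemma append_less_append_iff: "(u @ x :: 'a::linorder list) < u @ y \<longleftrightarrow> x < y"
  by (induction u) auto

lemma less_eq_list_iff_prefix_or_fork:
  "(x::'a::linorder list) \<le> y \<longleftrightarrow> prefix x y \<or> (\<exists>u a b v w. x = u @ a # v \<and> y = u @ b # w \<and> a < b)"
proof
  assume "x \<le> y"
  then show "prefix x y \<or> (\<exists>u a b v w. x = u @ a # v \<and> y = u @ b # w \<and> a < b)"
    unfolding list_le_def list_less_def lexord_def prefix_def by blast
qed (auto intro: prefix_imp_less_eq less_imp_le append_Cons_less)

lemma tot_le_iff_less_eq: "tot_le x y \<longleftrightarrow> (x::nat list) \<le> y"
proof -
  have fork_not_prefix: "\<not> prefix x y"
    if "x = u @ a # v" "y = u @ b # w" "a \<noteq> b" for x y u v w and a b :: nat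
    using that by simp
  show ?thesis
    unfolding less_eq_list_iff_prefix_or_fork tot_le_def r_le_def r_lt_def h_le_def
    by (metis fork_not_prefix order.strict_iff_not prefix_order.eq_iff)
qed

lemma prefix_if_between:
  "(x::'a::linorder list) \<le> y \<Longrightarrow> y \<le> z \<Longrightarrow> prefix x z \<Longrightarrow> prefix x y"
proof (induction x arbitrary: y z)
  case (Cons a x)
  obtain z' where z: "z = a # z'" using Cons.prems(3) by (auto simp: prefix_def)
  obtain b y' where y: "y = b # y'" using Cons.prems(1) by (cases y) auto
  have "b = a" using Cons.prems(1,2) unfolding y z by (auto split: if_splits)
  with Cons y z show ?case by auto
qed simp

lemma is_vertex_Nil [simp]: "\<not> is_vertex F []"
  by (auto elim: is_vertex.cases)

lemma is_vertex_Cons: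
  "is_vertex F (j # p) \<longleftrightarrow> j < length F \<and> (p = [] \<or> is_vertex (children (F ! j)) p)"
  by (auto elim: is_vertex.cases intro: is_vertex.intros)

lemma size_children_nth_less: "j < length F \<Longrightarrow> size_list size (children (F ! j)) < size_list size F"
proof -
  assume j: "j < length F"
  have "size (F ! j) = size_list size (children (F ! j)) + 1" by (cases "F ! j") auto
  moreover have "size (F ! j) \<le> size_list size F"
    using j by (intro size_list_estimation') auto
  ultimately show ?thesis by simp
qed

lemma vertices_unfold: "vertices F = (\<Union>j<length F. insert [j] (Cons j ` vertices (children (F ! j))))"
proof -
  have "is_vertex F x \<longleftrightarrow> (\<exists>j<length F. x = [j] \<or> (\<exists>p. x = j # p \<and> is_vertex (children (F ! j)) p))"
    for x by (cases x) (auto simp: is_vertex_Cons)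
  then show ?thesis unfolding vertices_def by blast
qed

lemma finite_vertices: "finite (vertices F)"
proof (induction F rule: measure_induct_rule[where f = "size_list size"])
  case (less F)
  show ?case unfolding vertices_unfold[of F] using less size_children_nth_less by auto
qed

lemma vertices_inject: "vertices F = vertices G \<Longrightarrow> F = G"
proof (induction F arbitrary: G rule: measure_induct_rule[where f = "size_list size"])
  case (less F)
  have vertex_iff: "is_vertex F x \<longleftrightarrow> is_vertex G x" for x
    using less.prems by (auto simp: vertices_def set_eq_iff)
  have len: "length F = length G"
    using vertex_iff[of "[_]"] by (metis is_vertex_Cons linorder_neqE_nat less_irrefl)
  show ?case
  proof (rule nth_equalityI[OF len])
    fix j assume j: "j < length F"
    have "is_vertex (children (F ! j)) p \<longleftrightarrow> is_vertex (children (G ! j)) p" for p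
      using vertex_iff[of "j # p"] j len by (cases "p = []") (auto simp: is_vertex_Cons)
    then have "vertices (children (F ! j)) = vertices (children (G ! j))"
      by (simp add: vertices_def)
    then have "children (F ! j) = children (G ! j)"
      using less.IH[OF size_children_nth_less[OF j]] by blast
    then show "F ! j = G ! j" by (metis ptree.collapse)
  qed
qed

lemma is_vertex_prefix: "is_vertex F x \<Longrightarrow> prefix r x \<Longrightarrow> r \<noteq> [] \<Longrightarrow> is_vertex F r"
proof (induction r arbitrary: F x)
  case (Cons a r)
  then show ?case by (cases x) (auto simp: is_vertex_Cons)
qed simp

lemma is_vertex_sibling: "is_vertex F (p @ [k]) \<Longrightarrow> k' \<le> k \<Longrightarrow> is_vertex F (p @ [k'])"
  by (induction p arbitrary: F) (auto simp: is_vertex_Cons)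

fun node :: "pforest \<Rightarrow> nat list \<Rightarrow> ptree" where
  "node F [] = Node F"
| "node F [i] = F ! i"
| "node F (i # j # s) = node (children (F ! i)) (j # s)"

lemma is_vertex_snoc:
  "s \<noteq> [] \<Longrightarrow> is_vertex F (s @ [k]) \<longleftrightarrow> is_vertex F s \<and> k < length (children (node F s))"
  by (induction F s rule: node.induct) (auto simp: is_vertex_Cons)

lemma ball_vertices_ConsI:
  "(\<And>a p. is_vertex F (a # p) \<Longrightarrow> P (a # p)) \<Longrightarrow> \<forall>x\<in>vertices F. P x"
  unfolding vertices_def by (metis is_vertex_Nil list.exhaust mem_Collect_eq)

lemma ball2_vertices_ConsI:
  "(\<And>a p b q. is_vertex F (a # p) \<Longrightarrow> is_vertex F (b # q) \<Longrightarrow> P (a # p) (b # q)) \<Longrightarrow>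
   \<forall>x\<in>vertices F. \<forall>y\<in>vertices F. P x y"
  by (intro ball_vertices_ConsI) (simp add: vertices_def)

definition witnesses_le :: "pforest \<Rightarrow> pforest \<Rightarrow> (nat list \<Rightarrow> nat list) \<Rightarrow> bool" where
  "witnesses_le F G \<theta> \<longleftrightarrow> bij_betw \<theta> (vertices F) (vertices G) \<and> mono_on (vertices F) \<theta> \<and>
     (\<forall>x\<in>vertices F. \<forall>y\<in>vertices F. prefix (\<theta> x) (\<theta> y) \<longrightarrow> prefix x y)"

lemma forest_le_iff_witnesses_le: "forest_le F G \<longleftrightarrow> (\<exists>\<theta>. witnesses_le F G \<theta>)"
  unfolding forest_le_def witnesses_le_def tot_le_iff_less_eq h_le_def mono_on_def
  by (auto dest: bij_betw_same_card)

lemma witnesses_le_id: "witnesses_le F F id"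
  by (simp add: witnesses_le_def mono_on_def)

lemma witnesses_le_comp:
  assumes "witnesses_le F G \<theta>" and "witnesses_le G H \<phi>"
  shows "witnesses_le F H (\<phi> \<circ> \<theta>)"
proof -
  have "\<theta> x \<in> vertices G" if "x \<in> vertices F" for x
    using assms(1) that by (auto simp: witnesses_le_def dest: bij_betwE)
  with assms show ?thesis
    unfolding witnesses_le_def mono_on_def by (auto intro: bij_betw_trans)
qed

lemma mono_on_inv_into:
  fixes f :: "'a::linorder \<Rightarrow> 'b::linorder"
  assumes f: "bij_betw f A B" and mono: "mono_on A f"
  shows "mono_on B (inv_into A f)"
proof (rule mono_onI, rule ccontr)
  fix x y assume xy: "x \<in> B" "y \<in> B" "x \<le> y" "\<not> inv_into A f x \<le> inv_into A f y"
  have inv: "inv_into A f z \<in> A" "f (inv_into A f z) = z" if "z \<in> B" for z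
    using f that by (auto simp: bij_betw_def inv_into_into f_inv_into_f)
  have "y \<le> x"
    using mono_onD[OF mono inv(1)[OF xy(2)] inv(1)[OF xy(1)]] xy(4) inv(2) xy(1,2) by simp
  with xy show False by simp
qed

fun transform_at :: "nat list \<Rightarrow> pforest \<Rightarrow> pforest" where
  "transform_at [i] F =
     take i F @ Node (butlast (children (F ! i))) # last (children (F ! i)) # drop (Suc i) F"
| "transform_at (i # j # s) F = F[i := Node (transform_at (j # s) (children (F ! i)))]"

fun relocate_root :: "nat \<Rightarrow> pforest \<Rightarrow> nat list \<Rightarrow> nat list" where
  "relocate_root i F [] = []"
| "relocate_root i F (j # p) =
     (if j < i then j # p else if i < j then Suc j # p else
      (case p of [] \<Rightarrow> [i]
       | k # q \<Rightarrow> if Suc k = length (children (F ! i)) then Suc i # q else i # k # q))"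

fun lift_at :: "nat \<Rightarrow> (nat list \<Rightarrow> nat list) \<Rightarrow> nat list \<Rightarrow> nat list" where
  "lift_at i \<phi> [] = []"
| "lift_at i \<phi> (a # p) = (if a = i \<and> p \<noteq> [] then i # \<phi> p else a # p)"

text \<open>\<open>relocate s F x\<close> is the address in \<open>transform_at s F\<close> of the vertex with address \<open>x\<close> in \<open>F\<close>.\<close>

fun relocate :: "nat list \<Rightarrow> pforest \<Rightarrow> nat list \<Rightarrow> nat list" where
  "relocate [i] F = relocate_root i F"
| "relocate (i # j # s) F = lift_at i (relocate (j # s) (children (F ! i)))"

definition cuts_edge ::
  "pforest \<Rightarrow> pforest \<Rightarrow> (nat list \<Rightarrow> nat list) \<Rightarrow> nat list \<Rightarrow> nat list \<Rightarrow> bool" where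
  "cuts_edge F F' \<phi> s c \<longleftrightarrow> witnesses_le F F' \<phi> \<and>
     is_vertex F s \<and> is_vertex F c \<and> prefix s c \<and> \<not> prefix (\<phi> s) (\<phi> c) \<and>
     (\<forall>x\<in>vertices F. \<forall>y\<in>vertices F. prefix x y \<longrightarrow> prefix (\<phi> x) (\<phi> y) \<or> x = s \<and> prefix c y)"

context
  fixes F :: pforest and i :: nat
  assumes i: "i < length F" and children_ne: "children (F ! i) \<noteq> []"
begin

lemma length_children_pos: "0 < length (children (F ! i))"
  using children_ne by simp

lemma length_transform_at_root: "length (transform_at [i] F) = Suc (length F)"
  using i by simp

lemma nth_transform_at_root:
  "j < Suc (length F) \<Longrightarrow> transform_at [i] F ! j =
    (if j < i then F ! j else if j = i then Node (butlast (children (F ! i)))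
     else if j = Suc i then last (children (F ! i)) else F ! (j - 1))"
  using i by (auto simp: nth_append min_def nth_Cons' Suc_diff_Suc numeral_2_eq_2)

lemma is_vertex_transform_at_root:
  "is_vertex (transform_at [i] F) (j # p) \<longleftrightarrow>
   (j < i \<and> is_vertex F (j # p)) \<or>
   (j = i \<and> (p = [] \<or>
      (\<exists>k q. p = k # q \<and> Suc k < length (children (F ! i)) \<and> is_vertex F (i # p)))) \<or>
   (j = Suc i \<and> is_vertex F (i # (length (children (F ! i)) - 1) # p)) \<or>
   (Suc i < j \<and> is_vertex F ((j - 1) # p))"
  using i length_children_pos
  by (cases p; cases "j < i"; cases "j = i"; cases "j = Suc i")
    (auto simp del: transform_at.simps simp: is_vertex_Cons length_transform_at_root nth_transform_at_root
      nth_butlast last_conv_nth)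

lemma is_vertex_child_iff:
  "is_vertex F (i # k # q) \<longleftrightarrow>
   k < length (children (F ! i)) \<and> (q = [] \<or> is_vertex (children (children (F ! i) ! k)) q)"
  using i by (auto simp: is_vertex_Cons)

lemma Suc_eq_length_children_iff:
  "Suc k = length (children (F ! i)) \<longleftrightarrow> k = length (children (F ! i)) - 1"
  using length_children_pos by auto

fun unrelocate_root :: "nat list \<Rightarrow> nat list" where
  "unrelocate_root [] = []"
| "unrelocate_root (j # p) =
     (if j \<le> i then j # p else if j = Suc i then i # (length (children (F ! i)) - 1) # p
      else (j - 1) # p)"

lemma relocate_root_vertex:
  assumes "is_vertex F x" shows
   "is_vertex (transform_at [i] F) (relocate_root i F x) \<and> unrelocate_root (relocate_root i F x) = x"
proof (cases x)
  case (Cons j p)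
  then show ?thesis
    using assms i length_children_pos
    by (cases p) (auto simp: is_vertex_transform_at_root is_vertex_child_iff
        Suc_eq_length_children_iff simp del: transform_at.simps split: list.splits)
qed (use assms in simp)

lemma unrelocate_root_vertex:
  assumes "is_vertex (transform_at [i] F) y" shows
   "is_vertex F (unrelocate_root y) \<and> relocate_root i F (unrelocate_root y) = y"
proof (cases y)
  case (Cons j p)
  have "is_vertex F [i]" using i by (simp add: is_vertex_Cons)
  then show ?thesis
    using assms Cons i length_children_pos
    by (cases p) (auto simp: is_vertex_transform_at_root is_vertex_child_iff
        Suc_eq_length_children_iff simp del: transform_at.simps split: list.splits)
qed (use assms in simp)

lemma bij_betw_relocate_root: "bij_betw (relocate_root i F) (vertices F) (vertices (transform_at [i] F))"
  by (rule bij_betw_byWitness[where f' = unrelocate_root])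
    (use relocate_root_vertex unrelocate_root_vertex in \<open>auto simp: vertices_def\<close>)

lemma relocate_root_mono:
  "is_vertex F (j # p) \<Longrightarrow> is_vertex F (j' # p') \<Longrightarrow> j # p \<le> j' # p' \<Longrightarrow>
   relocate_root i F (j # p) \<le> relocate_root i F (j' # p')"
  using i length_children_pos
  by (cases p; cases p')
    (auto simp: is_vertex_child_iff Suc_eq_length_children_iff split: list.splits)

lemma relocate_root_reflects_prefix:
  "is_vertex F (j # p) \<Longrightarrow> is_vertex F (j' # p') \<Longrightarrow>
   prefix (relocate_root i F (j # p)) (relocate_root i F (j' # p')) \<Longrightarrow> prefix (j # p) (j' # p')"
  using i length_children_pos
  by (cases p; cases p')
    (auto simp: is_vertex_child_iff Suc_eq_length_children_iff split: list.splits if_splits)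

lemma relocate_root_preserves_prefix:
  "is_vertex F (j # p) \<Longrightarrow> is_vertex F (j' # p') \<Longrightarrow> prefix (j # p) (j' # p') \<Longrightarrow>
   prefix (relocate_root i F (j # p)) (relocate_root i F (j' # p')) \<or>
   j # p = [i] \<and> prefix [i, length (children (F ! i)) - 1] (j' # p')"
  using i length_children_pos
  by (cases p; cases p')
    (auto simp: is_vertex_child_iff Suc_eq_length_children_iff split: list.splits if_splits)

end

lemma cuts_edge_transform_at_root:
  assumes i: "i < length F" and children_ne: "children (F ! i) \<noteq> []"
  shows "cuts_edge F (transform_at [i] F) (relocate_root i F) [i] [i, length (children (F ! i)) - 1]"
proof -
  have "mono_on (vertices F) (relocate_root i F)"
    using ball2_vertices_ConsI[of F "\<lambda>x y. x \<le> y \<longrightarrow> relocate_root i F x \<le> relocate_root i F y"]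
      relocate_root_mono[OF i children_ne] by (auto simp: mono_on_def)
  moreover have "\<forall>x\<in>vertices F. \<forall>y\<in>vertices F.
      prefix (relocate_root i F x) (relocate_root i F y) \<longrightarrow> prefix x y"
    using relocate_root_reflects_prefix[OF i children_ne] by (intro ball2_vertices_ConsI) blast
  moreover have "\<forall>x\<in>vertices F. \<forall>y\<in>vertices F. prefix x y \<longrightarrow>
      prefix (relocate_root i F x) (relocate_root i F y) \<or>
      x = [i] \<and> prefix [i, length (children (F ! i)) - 1] y"
    using relocate_root_preserves_prefix[OF i children_ne] by (intro ball2_vertices_ConsI) blast
  moreover have "\<not> prefix (relocate_root i F [i]) (relocate_root i F [i, length (children (F ! i)) - 1])"
    using children_ne by (cases "children (F ! i)") auto
  moreover have "is_vertex F [i]" "is_vertex F [i, length (children (F ! i)) - 1]"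
    using i children_ne by (simp_all add: is_vertex_Cons)
  ultimately show ?thesis
    using bij_betw_relocate_root[OF i children_ne] by (simp add: cuts_edge_def witnesses_le_def)
qed

lemma is_vertex_list_update_Cons:
  "i < length F \<Longrightarrow> is_vertex (F[i := Node cs']) (a # p) \<longleftrightarrow>
   a < length F \<and> (p = [] \<or> is_vertex (if a = i then cs' else children (F ! a)) p)"
  by (auto simp: is_vertex_Cons)

lemma bij_betw_lift_at:
  assumes i: "i < length F" and bij: "bij_betw \<phi> (vertices (children (F ! i))) (vertices cs')"
  shows "bij_betw (lift_at i \<phi>) (vertices F) (vertices (F[i := Node cs']))"
proof -
  let ?cs = "children (F ! i)" and ?F' = "F[i := Node cs']"
  define \<psi> where "\<psi> = inv_into (vertices ?cs) \<phi>"
  have \<phi>_vertex: "is_vertex cs' (\<phi> p) \<and> \<phi> p \<noteq> []" if "is_vertex ?cs p" for p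
  proof -
    have "is_vertex cs' (\<phi> p)" using bij that by (auto simp: vertices_def dest: bij_betwE)
    then show ?thesis by fastforce
  qed
  have \<psi>_\<phi>: "\<psi> (\<phi> p) = p" if "is_vertex ?cs p" for p
    using bij that unfolding \<psi>_def vertices_def by (simp add: bij_betw_inv_into_left)
  have \<psi>_vertex: "is_vertex ?cs (\<psi> p) \<and> \<psi> p \<noteq> [] \<and> \<phi> (\<psi> p) = p" if "is_vertex cs' p" for p
  proof -
    have "p \<in> \<phi> ` vertices ?cs"
      using bij that by (simp add: bij_betw_def vertices_def)
    then obtain x where "is_vertex ?cs x" "p = \<phi> x"
      by (auto simp: vertices_def)
    then show ?thesis using \<psi>_\<phi> by fastforce
  qed
  show ?thesis
  proof (rule bij_betw_byWitness[where f' = "lift_at i \<psi>"])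
    show "\<forall>a\<in>vertices F. lift_at i \<psi> (lift_at i \<phi> a) = a"
      by (rule ball_vertices_ConsI) (auto simp: is_vertex_Cons \<psi>_\<phi> \<phi>_vertex)
    show "\<forall>a\<in>vertices ?F'. lift_at i \<phi> (lift_at i \<psi> a) = a"
      by (rule ball_vertices_ConsI) (auto simp: is_vertex_list_update_Cons[OF i] \<psi>_vertex)
    have "\<forall>x\<in>vertices F. lift_at i \<phi> x \<in> vertices ?F'"
      by (rule ball_vertices_ConsI)
        (auto simp: is_vertex_Cons is_vertex_list_update_Cons[OF i] vertices_def \<phi>_vertex)
    then show "lift_at i \<phi> ` vertices F \<subseteq> vertices ?F'" by blast
    have "\<forall>x\<in>vertices ?F'. lift_at i \<psi> x \<in> vertices F"
      by (rule ball_vertices_ConsI)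
        (auto simp: is_vertex_Cons is_vertex_list_update_Cons[OF i] vertices_def \<psi>_vertex)
    then show "lift_at i \<psi> ` vertices ?F' \<subseteq> vertices F" by blast
  qed
qed

lemma cuts_edge_lift_at:
  assumes i: "i < length F" and cut: "cuts_edge (children (F ! i)) cs' \<phi> s c"
  shows "cuts_edge F (F[i := Node cs']) (lift_at i \<phi>) (i # s) (i # c)"
proof -
  let ?cs = "children (F ! i)"
  have bij: "bij_betw \<phi> (vertices ?cs) (vertices cs')"
    and mono: "\<And>x y. is_vertex ?cs x \<Longrightarrow> is_vertex ?cs y \<Longrightarrow> x \<le> y \<Longrightarrow> \<phi> x \<le> \<phi> y"
    and reflects: "\<And>x y. is_vertex ?cs x \<Longrightarrow> is_vertex ?cs y \<Longrightarrow> prefix (\<phi> x) (\<phi> y) \<Longrightarrow> prefix x y"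
    and preserves: "\<And>x y. is_vertex ?cs x \<Longrightarrow> is_vertex ?cs y \<Longrightarrow> prefix x y \<Longrightarrow>
        prefix (\<phi> x) (\<phi> y) \<or> x = s \<and> prefix c y"
    and edge: "is_vertex ?cs s" "is_vertex ?cs c" "prefix s c" "\<not> prefix (\<phi> s) (\<phi> c)"
    using cut by (auto simp: cuts_edge_def witnesses_le_def mono_on_def vertices_def)
  have \<phi>_ne: "\<phi> p \<noteq> []" if "is_vertex ?cs p" for p
    using bij that by (fastforce simp: vertices_def dest: bij_betwE)
  have "\<forall>x\<in>vertices F. \<forall>y\<in>vertices F. x \<le> y \<longrightarrow> lift_at i \<phi> x \<le> lift_at i \<phi> y"
    by (rule ball2_vertices_ConsI) (auto simp: is_vertex_Cons \<phi>_ne mono)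
  moreover have "\<forall>x\<in>vertices F. \<forall>y\<in>vertices F. prefix (lift_at i \<phi> x) (lift_at i \<phi> y) \<longrightarrow> prefix x y"
    by (rule ball2_vertices_ConsI) (auto simp: is_vertex_Cons \<phi>_ne reflects)
  moreover have "\<forall>x\<in>vertices F. \<forall>y\<in>vertices F. prefix x y \<longrightarrow>
      prefix (lift_at i \<phi> x) (lift_at i \<phi> y) \<or> x = i # s \<and> prefix (i # c) y"
    by (rule ball2_vertices_ConsI) (auto simp: is_vertex_Cons \<phi>_ne dest: preserves)
  ultimately show ?thesis
    using bij_betw_lift_at[OF i bij] edge i
    by (auto simp: cuts_edge_def witnesses_le_def mono_on_def is_vertex_Cons)
qed

lemma cuts_edge_transform_at:
  "is_vertex F s \<Longrightarrow> children (node F s) \<noteq> [] \<Longrightarrow>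
   cuts_edge F (transform_at s F) (relocate s F) s (s @ [length (children (node F s)) - 1])"
proof (induction s F rule: transform_at.induct)
  case (1 i F)
  then show ?case using cuts_edge_transform_at_root[of i F] by (simp add: is_vertex_Cons)
next
  case (2 i j s F)
  then show ?case using cuts_edge_lift_at[of i F] by (simp add: is_vertex_Cons)
qed auto

lemma transform_transform_at:
  "is_vertex F s \<Longrightarrow> children (node F s) \<noteq> [] \<Longrightarrow> transform F (transform_at s F)"
proof (induction s F rule: transform_at.induct)
  case (1 i F)
  then show ?case using transform.here[of i F "children (F ! i)"] by (simp add: is_vertex_Cons)
next
  case (2 i j s F)
  then show ?case using transform.below[of i F "children (F ! i)"] by (simp add: is_vertex_Cons)
qed auto

lemma transform_imp_transform_at:
  "transform F G \<Longrightarrow> \<exists>s. is_vertex F s \<and> children (node F s) \<noteq> [] \<and> G = transform_at s F"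
proof (induction rule: transform.induct)
  case (here i F cs)
  then show ?case by (intro exI[of _ "[i]"]) (auto simp: is_vertex_Cons)
next
  case (below i F cs cs')
  then obtain j s where "is_vertex cs (j # s)" "children (node cs (j # s)) \<noteq> []"
    "cs' = transform_at (j # s) cs"
    by (metis is_vertex_Nil list.exhaust)
  with below show ?case by (intro exI[of _ "i # j # s"]) (auto simp: is_vertex_Cons)
qed

lemma transform_imp_witnesses_le: "transform F G \<Longrightarrow> \<exists>\<phi>. witnesses_le F G \<phi>"
  using transform_imp_transform_at cuts_edge_transform_at by (metis cuts_edge_def)

lemma rtranclp_transform_imp_witnesses_le: "transform\<^sup>*\<^sup>* F G \<Longrightarrow> \<exists>\<theta>. witnesses_le F G \<theta>"
proof (induction rule: rtranclp_induct)
  case base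
  then show ?case using witnesses_le_id by blast
next
  case (step G H)
  then show ?case using transform_imp_witnesses_le witnesses_le_comp by blast
qed

context
  fixes F G :: pforest and \<theta> :: "nat list \<Rightarrow> nat list"
  assumes \<theta>: "witnesses_le F G \<theta>"
    and preserves: "\<forall>x\<in>vertices F. \<forall>y\<in>vertices F. prefix x y \<longrightarrow> prefix (\<theta> x) (\<theta> y)"
begin

lemma image_vertex: "is_vertex F x \<Longrightarrow> is_vertex G (\<theta> x)"
  using \<theta> by (auto simp: witnesses_le_def vertices_def dest: bij_betwE)

lemma vertex_image: "is_vertex G y \<Longrightarrow> \<exists>x. is_vertex F x \<and> \<theta> x = y"
  using \<theta> unfolding witnesses_le_def bij_betw_def vertices_def by (metis imageE mem_Collect_eq)

lemma image_inject: "is_vertex F x \<Longrightarrow> is_vertex F y \<Longrightarrow> \<theta> x = \<theta> y \<Longrightarrow> x = y"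
  using \<theta> by (auto simp: witnesses_le_def bij_betw_def inj_on_def vertices_def)

lemma image_less_imp_less: "is_vertex F x \<Longrightarrow> is_vertex F y \<Longrightarrow> \<theta> x < \<theta> y \<Longrightarrow> x < y"
  using \<theta> by (auto simp: witnesses_le_def vertices_def elim: mono_on_strict_invE)

lemma prefix_image_iff: "is_vertex F x \<Longrightarrow> is_vertex F y \<Longrightarrow> prefix (\<theta> x) (\<theta> y) \<longleftrightarrow> prefix x y"
  using \<theta> preserves by (auto simp: witnesses_le_def vertices_def)

context
  fixes p :: "nat list" and k :: nat
  assumes vertex: "is_vertex F (p @ [k])"
    and fixed: "\<And>y. is_vertex F y \<Longrightarrow> y < p @ [k] \<Longrightarrow> \<theta> y = y"
begin

lemma parent_fixed: "p \<noteq> [] \<Longrightarrow> is_vertex F p \<and> \<theta> p = p"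
  using vertex fixed[of p] is_vertex_prefix[of F "p @ [k]" p] prefix_imp_less_eq[of p "p @ [k]"]
  by (simp add: order.strict_iff_order)

lemma prefix_parent_image_iff: "is_vertex F z \<Longrightarrow> prefix p (\<theta> z) \<longleftrightarrow> prefix p z"
  using prefix_image_iff[of p z] parent_fixed by (cases "p = []") auto

lemma image_neq_parent: "is_vertex F z \<Longrightarrow> z \<noteq> p \<Longrightarrow> \<theta> z \<noteq> p"
  using image_vertex[of z] parent_fixed image_inject by (cases "p = []") auto

lemma image_sibling: "\<exists>j. \<theta> (p @ [k]) = p @ [j]"
proof -
  obtain r j where rj: "\<theta> (p @ [k]) = r @ [j]"
    using image_vertex[OF vertex] by (cases "\<theta> (p @ [k])" rule: rev_cases) auto
  have "prefix p (r @ [j])" "r @ [j] \<noteq> p"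
    using prefix_parent_image_iff[OF vertex] image_neq_parent[OF vertex] rj by auto
  then have "prefix p r" by (auto simp: prefix_snoc)
  moreover have "prefix r p"
  proof (cases "r = []")
    case False
    then obtain z where z: "is_vertex F z" "\<theta> z = r"
      using vertex_image is_vertex_prefix[OF image_vertex[OF vertex], of r] rj by auto
    then have "prefix z (p @ [k])" "z \<noteq> p @ [k]"
      using prefix_image_iff[OF z(1) vertex] rj by auto
    then have "prefix z p" "z < p @ [k]"
      using prefix_imp_less_eq[of z "p @ [k]"] by (auto simp: prefix_snoc order.strict_iff_order)
    then show ?thesis using fixed z by metis
  qed simp
  ultimately show ?thesis using rj by (metis prefix_order.antisym)
qed

lemma image_eq_if_predecessors_fixed: "\<theta> (p @ [k]) = p @ [k]"
proof -
  obtain j where j: "\<theta> (p @ [k]) = p @ [j]" using image_sibling by blast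
  have "\<not> j < k"
  proof
    assume "j < k"
    then have "is_vertex F (p @ [j])" "p @ [j] < p @ [k]"
      using vertex is_vertex_sibling append_Cons_less[of j k p "[]" "[]"] by auto
    then have "\<theta> (p @ [j]) = \<theta> (p @ [k])" using fixed j by simp
    then show False using image_inject[OF \<open>is_vertex F (p @ [j])\<close> vertex] \<open>j < k\<close> by simp
  qed
  moreover have "\<not> k < j"
  proof
    assume "k < j"
    have "is_vertex G (p @ [j])" using image_vertex[OF vertex] j by simp
    then have "is_vertex G (p @ [k])" using is_vertex_sibling[of G p j k] \<open>k < j\<close> by simp
    then obtain z where z: "is_vertex F z" "\<theta> z = p @ [k]" using vertex_image by blast
    then have "z < p @ [k]"
      using image_less_imp_less[OF z(1) vertex] j append_Cons_less[OF \<open>k < j\<close>, of p "[]" "[]"] by simp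
    have "z \<noteq> p" using z parent_fixed by fastforce
    moreover have "prefix p z" using prefix_parent_image_iff[OF z(1)] z(2) by simp
    ultimately obtain c w where zcw: "z = p @ c # w"
      by (metis append_Nil2 neq_Nil_conv prefix_def)
    have "c < k"
      using \<open>z < p @ [k]\<close> by (simp add: zcw append_less_append_iff)
    have "is_vertex F (p @ [c])" "p @ [c] < p @ [k]"
      using is_vertex_prefix[OF z(1), of "p @ [c]"] append_Cons_less[OF \<open>c < k\<close>, of p "[]" "[]"]
      by (simp_all add: zcw)
    then have "prefix (p @ [c]) (\<theta> z)"
      using fixed prefix_image_iff[OF _ z(1), of "p @ [c]"] by (simp add: zcw)
    then show False using z(2) \<open>c < k\<close> by simp
  qed
  ultimately show ?thesis using j by simp
qed

end

lemma vertices_fixed: "is_vertex F x \<Longrightarrow> \<theta> x = x"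
proof (rule ccontr)
  assume "is_vertex F x" "\<theta> x \<noteq> x"
  define C where "C = {y. is_vertex F y \<and> \<theta> y \<noteq> y}"
  have "finite C"
    using finite_vertices[of F] by (rule rev_finite_subset) (auto simp: C_def vertices_def)
  moreover have "x \<in> C" using \<open>is_vertex F x\<close> \<open>\<theta> x \<noteq> x\<close> by (simp add: C_def)
  ultimately have min: "Min C \<in> C" using Min_in by blast
  obtain p k where pk: "Min C = p @ [k]"
    using min by (cases "Min C" rule: rev_cases) (auto simp: C_def)
  have "\<theta> y = y" if "is_vertex F y" "y < p @ [k]" for y
  proof (rule ccontr)
    assume "\<theta> y \<noteq> y"
    then have "Min C \<le> y" using that(1) \<open>finite C\<close> by (simp add: C_def)
    with that(2) pk show False by simp
  qed
  moreover have "p @ [k] \<in> C" using min pk by simp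
  ultimately show False
    using image_eq_if_predecessors_fixed[of p k] by (simp add: C_def)
qed

end

lemma prefix_image_if_edges_preserved:
  assumes edges: "\<And>s k. s \<noteq> [] \<Longrightarrow> is_vertex F (s @ [k]) \<Longrightarrow> prefix (\<theta> s) (\<theta> (s @ [k]))"
    and x: "is_vertex F x"
  shows "is_vertex F (x @ w) \<Longrightarrow> prefix (\<theta> x) (\<theta> (x @ w))"
proof (induction w rule: rev_induct)
  case (snoc a w)
  have "x \<noteq> []" using x by auto
  then have "is_vertex F (x @ w)"
    using is_vertex_prefix[OF snoc.prems, of "x @ w"] by simp
  then show ?case
    using snoc.IH edges[of "x @ w" a] snoc.prems \<open>x \<noteq> []\<close> by (auto intro: prefix_order.trans)
qed simp

lemma last_child_edge_broken:
  fixes \<theta> :: "nat list \<Rightarrow> nat list"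
  assumes mono: "mono_on (vertices F) \<theta>" and s: "s \<noteq> []" and sk: "is_vertex F (s @ [k])"
    and broken: "\<not> prefix (\<theta> s) (\<theta> (s @ [k]))"
  shows "\<not> prefix (\<theta> s) (\<theta> (s @ [length (children (node F s)) - 1]))"
proof
  let ?l = "length (children (node F s)) - 1"
  have "is_vertex F s" "k < length (children (node F s))"
    using is_vertex_snoc[OF s] sk by simp_all
  then have vertices: "s \<in> vertices F" "s @ [k] \<in> vertices F" "s @ [?l] \<in> vertices F"
    using sk is_vertex_snoc[OF s] by (simp_all add: vertices_def)
  have "s \<le> s @ [k]" by (simp add: prefix_imp_less_eq)
  moreover have "s @ [k] \<le> s @ [?l]"
  proof (cases "k = ?l")
    case False
    with \<open>k < length (children (node F s))\<close> have "s @ [k] < s @ [?l]"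
      by (simp add: append_less_append_iff)
    then show ?thesis by simp
  qed simp
  ultimately have "\<theta> s \<le> \<theta> (s @ [k])" "\<theta> (s @ [k]) \<le> \<theta> (s @ [?l])"
    using mono_onD[OF mono] vertices by blast+
  moreover assume "prefix (\<theta> s) (\<theta> (s @ [?l]))"
  ultimately show False
    using broken prefix_if_between[of "\<theta> s" "\<theta> (s @ [k])" "\<theta> (s @ [?l])"] by simp
qed

definition ancestry_pairs :: "pforest \<Rightarrow> (nat list \<times> nat list) set" where
  "ancestry_pairs F = {(x, y) \<in> vertices F \<times> vertices F. prefix x y}"

lemma card_ancestry_pairs_less:
  assumes cut: "cuts_edge F F' \<phi> s c"
  shows "card (ancestry_pairs F') < card (ancestry_pairs F)"
proof -
  have bij: "bij_betw \<phi> (vertices F) (vertices F')"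
    and reflects: "\<forall>x\<in>vertices F. \<forall>y\<in>vertices F. prefix (\<phi> x) (\<phi> y) \<longrightarrow> prefix x y"
    and broken: "\<not> prefix (\<phi> s) (\<phi> c)"
    and edge: "(s, c) \<in> ancestry_pairs F"
    using cut by (auto simp: cuts_edge_def witnesses_le_def ancestry_pairs_def vertices_def)
  have finite: "finite (ancestry_pairs F)"
    using finite_vertices[of F] by (auto simp: ancestry_pairs_def intro: rev_finite_subset)
  have "ancestry_pairs F' \<subseteq> map_prod \<phi> \<phi> ` (ancestry_pairs F - {(s, c)})"
  proof
    fix q assume "q \<in> ancestry_pairs F'"
    then obtain x' y' where q: "q = (x', y')" "x' \<in> vertices F'" "y' \<in> vertices F'" "prefix x' y'"
      by (auto simp: ancestry_pairs_def)
    moreover obtain x y where "x \<in> vertices F" "y \<in> vertices F" "x' = \<phi> x" "y' = \<phi> y"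
      using bij q(2,3) by (metis bij_betw_def imageE)
    ultimately show "q \<in> map_prod \<phi> \<phi> ` (ancestry_pairs F - {(s, c)})"
      using reflects broken by (intro rev_image_eqI[of "(x, y)"]) (auto simp: ancestry_pairs_def)
  qed
  then have "card (ancestry_pairs F') \<le> card (map_prod \<phi> \<phi> ` (ancestry_pairs F - {(s, c)}))"
    using finite by (intro card_mono) auto
  also have "\<dots> \<le> card (ancestry_pairs F - {(s, c)})"
    using finite by (intro card_image_le) auto
  also have "\<dots> < card (ancestry_pairs F)"
    using finite edge by (intro card_Diff1_less)
  finally show ?thesis .
qed

lemma witnesses_le_after_cut:
  assumes \<theta>: "witnesses_le F G \<theta>" and cut: "cuts_edge F F' \<phi> s c"
    and broken: "\<not> prefix (\<theta> s) (\<theta> c)"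
  shows "witnesses_le F' G (\<theta> \<circ> inv_into (vertices F) \<phi>)"
proof -
  let ?\<psi> = "inv_into (vertices F) \<phi>"
  have \<phi>: "bij_betw \<phi> (vertices F) (vertices F')" "mono_on (vertices F) \<phi>"
    and preserves: "\<And>x y. x \<in> vertices F \<Longrightarrow> y \<in> vertices F \<Longrightarrow> prefix x y \<Longrightarrow>
        prefix (\<phi> x) (\<phi> y) \<or> x = s \<and> prefix c y"
    and edge: "s \<in> vertices F" "c \<in> vertices F" "prefix s c"
    using cut by (auto simp: cuts_edge_def witnesses_le_def vertices_def)
  have \<theta>_bij: "bij_betw \<theta> (vertices F) (vertices G)" and \<theta>_mono: "mono_on (vertices F) \<theta>"
    and \<theta>_reflects: "\<And>x y. x \<in> vertices F \<Longrightarrow> y \<in> vertices F \<Longrightarrow> prefix (\<theta> x) (\<theta> y) \<Longrightarrow> prefix x y"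
    using \<theta> by (auto simp: witnesses_le_def)
  have \<psi>: "?\<psi> x' \<in> vertices F \<and> \<phi> (?\<psi> x') = x'" if "x' \<in> vertices F'" for x'
    using \<phi>(1) that by (auto simp: bij_betw_def inv_into_into f_inv_into_f)
  have "bij_betw (\<theta> \<circ> ?\<psi>) (vertices F') (vertices G)"
    using bij_betw_trans[OF bij_betw_inv_into[OF \<phi>(1)] \<theta>_bij] .
  moreover have "mono_on (vertices F') (\<theta> \<circ> ?\<psi>)"
    using mono_on_inv_into[OF \<phi>] \<theta>_mono \<psi> by (auto simp: mono_on_def)
  moreover have "prefix x' y'"
    if "x' \<in> vertices F'" "y' \<in> vertices F'" "prefix (\<theta> (?\<psi> x')) (\<theta> (?\<psi> y'))" for x' y'
  proof -
    define x y where "x = ?\<psi> x'" and "y = ?\<psi> y'"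
    have xy: "x \<in> vertices F" "y \<in> vertices F" "\<phi> x = x'" "\<phi> y = y'"
      using \<psi> that by (auto simp: x_def y_def)
    have "prefix (\<theta> x) (\<theta> y)" using that by (simp add: x_def y_def)
    then have "prefix x y" using \<theta>_reflects xy by blast
    moreover have "\<not> (x = s \<and> prefix c y)"
    proof
      assume "x = s \<and> prefix c y"
      moreover have "s \<le> c" "c \<le> y" if "prefix c y"
        using edge that by (simp_all add: prefix_imp_less_eq)
      ultimately have "\<theta> s \<le> \<theta> c" "\<theta> c \<le> \<theta> y"
        using \<theta>_mono edge xy by (auto dest: mono_onD)
      with \<open>prefix (\<theta> x) (\<theta> y)\<close> \<open>x = s \<and> prefix c y\<close> broken
      show False using prefix_if_between[of "\<theta> s" "\<theta> c" "\<theta> y"] by simp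
    qed
    ultimately show ?thesis using preserves xy by blast
  qed
  ultimately show ?thesis by (auto simp: witnesses_le_def)
qed

lemma witnesses_le_imp_transform: "witnesses_le F G \<theta> \<Longrightarrow> transform\<^sup>*\<^sup>* F G"
proof (induction "card (ancestry_pairs F)" arbitrary: F \<theta> rule: less_induct)
  case less
  show ?case
  proof (cases "\<exists>s k. s \<noteq> [] \<and> is_vertex F (s @ [k]) \<and> \<not> prefix (\<theta> s) (\<theta> (s @ [k]))")
    case True
    then obtain s k where sk: "s \<noteq> []" "is_vertex F (s @ [k])" "\<not> prefix (\<theta> s) (\<theta> (s @ [k]))"
      by blast
    let ?c = "s @ [length (children (node F s)) - 1]"
    have "is_vertex F s" "children (node F s) \<noteq> []"
      using is_vertex_snoc[OF sk(1)] sk(2) by auto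
    then have cut: "cuts_edge F (transform_at s F) (relocate s F) s ?c"
      and step: "transform F (transform_at s F)"
      by (rule cuts_edge_transform_at, rule transform_transform_at)
    have "mono_on (vertices F) \<theta>" using less.prems by (simp add: witnesses_le_def)
    then have "\<not> prefix (\<theta> s) (\<theta> ?c)" using sk by (rule last_child_edge_broken)
    then have "transform\<^sup>*\<^sup>* (transform_at s F) G"
      by (rule less.hyps[OF card_ancestry_pairs_less[OF cut] witnesses_le_after_cut[OF less.prems cut]])
    with step show ?thesis by (rule converse_rtranclp_into_rtranclp)
  next
    case False
    then have edges: "\<And>s k. s \<noteq> [] \<Longrightarrow> is_vertex F (s @ [k]) \<Longrightarrow> prefix (\<theta> s) (\<theta> (s @ [k]))"
      by blast
    have preserves: "\<forall>x\<in>vertices F. \<forall>y\<in>vertices F. prefix x y \<longrightarrow> prefix (\<theta> x) (\<theta> y)"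
    proof (intro ballI impI)
      fix x y assume xy: "x \<in> vertices F" "y \<in> vertices F" "prefix x y"
      then obtain w where "y = x @ w" by (auto elim: prefixE)
      then show "prefix (\<theta> x) (\<theta> y)"
        using prefix_image_if_edges_preserved[where x = x and w = w, OF edges] xy
        by (simp add: vertices_def)
    qed
    have fixed: "\<theta> x = x" if "x \<in> vertices F" for x
      using vertices_fixed[OF less.prems preserves] that by (simp add: vertices_def)
    have "vertices G = \<theta> ` vertices F"
      using less.prems by (simp add: witnesses_le_def bij_betw_def)
    also have "\<dots> = vertices F"
      using fixed by force
    finally have "G = F" by (rule vertices_inject)
    then show ?thesis by simp
  qed
qed

theorem proposition20:
  fixes F G :: pforest and n :: nat
  assumes "card (vertices F) = n" and "card (vertices G) = n"
  shows "forest_le F G \<longleftrightarrow> transform\<^sup>*\<^sup>* F G"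
proof
  assume "forest_le F G"
  then obtain \<theta> where "witnesses_le F G \<theta>" by (auto simp: forest_le_iff_witnesses_le)
  then show "transform\<^sup>*\<^sup>* F G" by (rule witnesses_le_imp_transform)
next
  assume "transform\<^sup>*\<^sup>* F G"
  then show "forest_le F G"
    by (simp add: forest_le_iff_witnesses_le rtranclp_transform_imp_witnesses_le)
qed

end
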